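(* Let $\phi:\mathbb{R}^d\to\mathbb{R}^d$ be $(L,\lambda)$-Hölder continuous with $L\ge0$, $\lambda\in(0,1]$, and let $I$ be the identity map. For $z\ge0$ let $h(z)$ be the unique $x\ge0$ solving $x+Lx^\lambda=z$. Then for all probability distributions $\mu,\nu$ on $\mathbb{R}^d$, all $\alpha>1$ and all $z\ge0$, $$D_\alpha^{(z)}\big((I+\phi)\sharp\mu\,\|\,(I+\phi)\sharp\nu\big)\le D_\alpha^{(h(z))}(\mu\|\nu).$$
   Context: $f\sharp\mu$ denotes the pushforward of $\mu$ under $f$. A map $f$ is $(L,\lambda)$-Hölder continuous if $\|f(w)-f(w')\|\le L\|w-w'\|^\lambda$ for all $w,w'$. For $\alpha>1$, $D_\alpha(\mu\|\nu)=\frac1{\alpha-1}\log\int(\mu/\nu)^\alpha d\nu$ if $\mu\ll\nu$, $+\infty$ otherwise. $W_\infty(\mu,\nu)=\inf_{\gamma\in\Gamma(\mu,\nu)}\operatorname{ess\,sup}_{(X,Y)\sim\gamma}\|X-Y\|$ over couplings $\gamma$. Shifted Rényi divergence: $D_\alpha^{(z)}(\mu\|\nu)=\inf_{\mu':W_\infty(\mu,\mu')\le z}D_\alpha(\mu'\|\nu)$ for $z\ge0$. *)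

theory Defs
  imports "HOL-Probability.Probability"
begin

definition prob_dist :: "'a::euclidean_space measure \<Rightarrow> bool" where
  "prob_dist \<mu> \<longleftrightarrow> prob_space \<mu> \<and> sets \<mu> = sets borel"

definition holder :: "real \<Rightarrow> real \<Rightarrow> ('a::real_normed_vector \<Rightarrow> 'b::real_normed_vector) \<Rightarrow> bool" where
  "holder L lam f \<longleftrightarrow> (\<forall>w w'. norm (f w - f w') \<le> L * norm (w - w') powr lam)"

definition pushforward :: "('a::euclidean_space \<Rightarrow> 'b::euclidean_space) \<Rightarrow> 'a measure \<Rightarrow> 'b measure" where
  "pushforward f \<mu> = distr \<mu> borel f"

text \<open>Renyi divergence D_alpha(mu || nu), valued in the extended reals.
  The density mu/nu is the Radon-Nikodym derivative RN_deriv nu mu.\<close>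
definition renyi :: "real \<Rightarrow> 'a::euclidean_space measure \<Rightarrow> 'a measure \<Rightarrow> ereal" where
  "renyi \<alpha> \<mu> \<nu> =
     (if absolutely_continuous \<nu> \<mu> then
        (let I = (\<integral>\<^sup>+ x. ennreal (enn2real (RN_deriv \<nu> \<mu> x) powr \<alpha>) \<partial>\<nu>)
         in if I = \<infinity> then \<infinity> else ereal (ln (enn2real I) / (\<alpha> - 1)))
      else \<infinity>)"

definition couplings :: "'a::euclidean_space measure \<Rightarrow> 'a measure \<Rightarrow> ('a \<times> 'a) measure set" where
  "couplings \<mu> \<nu> = {\<gamma>. prob_space \<gamma> \<and> sets \<gamma> = sets (borel \<Otimes>\<^sub>M borel) \<and>
                        distr \<gamma> borel fst = \<mu> \<and> distr \<gamma> borel snd = \<nu>}"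

definition W_inf :: "'a::euclidean_space measure \<Rightarrow> 'a measure \<Rightarrow> ereal" where
  "W_inf \<mu> \<nu> = (INF \<gamma> \<in> couplings \<mu> \<nu>. esssup \<gamma> (\<lambda>p. ereal (norm (fst p - snd p))))"

definition shifted_renyi :: "real \<Rightarrow> real \<Rightarrow> 'a::euclidean_space measure \<Rightarrow> 'a measure \<Rightarrow> ereal" where
  "shifted_renyi \<alpha> z \<mu> \<nu> =
     (INF \<mu>' \<in> {\<mu>'. prob_dist \<mu>' \<and> W_inf \<mu> \<mu>' \<le> ereal z}. renyi \<alpha> \<mu>' \<nu>)"

end

theory Submission
  imports Defs
begin

text \<open>
  The map T = id + \<phi> sends points at distance at most r to points at distance at most
  r + L r^lam. Pushing a coupling of \<mu> and \<mu>' forward along T \<times> T therefore gives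
  W_inf (T\<sharp>\<mu>) (T\<sharp>\<mu>') \<le> z whenever W_inf \<mu> \<mu>' \<le> h(z); as the infimum defining W_inf need
  not be attained, this needs continuity of r \<mapsto> r + L r^lam from the right. Combined with the
  data processing inequality D_\<alpha>(T\<sharp>\<mu>' || T\<sharp>\<nu>) \<le> D_\<alpha>(\<mu>' || \<nu>), every competitor \<mu>' on the
  right-hand side yields the competitor T\<sharp>\<mu>' on the left.

  The data processing inequality is proved without conditional expectations. Let f be the
  density of \<mu>' with respect to \<nu>, g that of T\<sharp>\<mu>' with respect to T\<sharp>\<nu>, and m = min g n. Then
  \<integral> m^\<alpha> d(T\<sharp>\<nu>) \<le> \<integral> g m^(\<alpha>-1) d(T\<sharp>\<nu>) = \<integral> f (m \<circ> T)^(\<alpha>-1) d\<nu>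
    \<le> (1/\<alpha>) \<integral> f^\<alpha> d\<nu> + (1 - 1/\<alpha>) \<integral> m^\<alpha> d(T\<sharp>\<nu>)
  by Young's inequality; the finite quantity \<integral> m^\<alpha> d(T\<sharp>\<nu>) is absorbed, and monotone
  convergence in n removes the truncation.
\<close>

lemma strict_mono_on_add_powr:
  fixes L lam :: real
  assumes "L \<ge> 0" "lam \<ge> 0"
  shows "strict_mono_on {0..} (\<lambda>x. x + L * x powr lam)"
proof (rule strict_mono_onI)
  fix x y :: real
  assume "x \<in> {0..}" "y \<in> {0..}" "x < y"
  then have "L * x powr lam \<le> L * y powr lam"
    using assms by (intro mult_left_mono powr_mono2) auto
  then show "x + L * x powr lam < y + L * y powr lam"
    using \<open>x < y\<close> by linarith
qed

lemma ex1_add_powr_eq: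
  fixes L lam z :: real
  assumes "L \<ge> 0" "lam > 0" "z \<ge> 0"
  shows "\<exists>!x. x \<ge> 0 \<and> x + L * x powr lam = z"
proof (rule ex_ex1I)
  have cont: "continuous_on {0..z} (\<lambda>x. x + L * x powr lam)"
    using assms by (intro continuous_intros continuous_on_powr') auto
  have "\<exists>x. 0 \<le> x \<and> x \<le> z \<and> x + L * x powr lam = z"
    by (rule IVT'[OF _ _ _ cont]) (use assms in auto)
  then show "\<exists>x. x \<ge> 0 \<and> x + L * x powr lam = z"
    by blast
next
  have inj: "inj_on (\<lambda>x. x + L * x powr lam) {0..}"
    using assms by (intro strict_mono_on_imp_inj_on strict_mono_on_add_powr) auto
  show "x = y"
    if "x \<ge> 0 \<and> x + L * x powr lam = z" "y \<ge> 0 \<and> y + L * y powr lam = z" for x y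
    using inj_onD[OF inj, of x y] that by auto
qed

lemma add_powr_eq_The:
  fixes L lam z :: real
  assumes "L \<ge> 0" "lam > 0" "z \<ge> 0"
  defines "h \<equiv> THE x. x \<ge> 0 \<and> x + L * x powr lam = z"
  shows "h \<ge> 0" and "h + L * h powr lam = z"
  using theI'[OF ex1_add_powr_eq[OF assms(1-3)]] unfolding h_def by auto

lemma add_powr_right_continuous:
  fixes L lam h d :: real
  assumes "L \<ge> 0" "lam > 0" "h \<ge> 0" "d > 0"
  shows "\<exists>e>0. (h + e) + L * (h + e) powr lam \<le> h + L * h powr lam + d"
proof -
  let ?\<psi> = "\<lambda>x. x + L * x powr lam"
  have "continuous_on {0..} ?\<psi>"
    using assms by (intro continuous_intros continuous_on_powr') auto
  then have "(?\<psi> \<longlongrightarrow> ?\<psi> h) (at h within {0..})"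
    using assms unfolding continuous_on_def by auto
  then have "\<forall>\<^sub>F x in at h within {0..}. ?\<psi> x < ?\<psi> h + d"
    using assms by (intro order_tendstoD) auto
  then obtain r where r: "r > 0"
    "\<And>x. x \<in> {0..} \<Longrightarrow> x \<noteq> h \<Longrightarrow> dist x h < r \<Longrightarrow> ?\<psi> x < ?\<psi> h + d"
    unfolding eventually_at by blast
  show ?thesis
    using r(2)[of "h + r/2"] r(1) assms by (intro exI[of _ "r/2"]) (auto simp: dist_real_def)
qed

lemma holder_continuous_on:
  fixes f :: "'a::real_normed_vector \<Rightarrow> 'b::real_normed_vector"
  assumes "holder L lam f" "lam > 0"
  shows "continuous_on UNIV f"
  unfolding continuous_on_def
proof (intro ballI)
  fix x :: 'a
  have "\<forall>y. norm (f y - f x) \<le> L * norm (y - x) powr lam"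
    using assms(1) by (simp add: holder_def)
  moreover have "((\<lambda>y. norm (y - x)) \<longlongrightarrow> 0) (at x within UNIV)"
    by (simp add: LIM_zero tendsto_ident_at tendsto_norm_zero)
  then have "((\<lambda>y. norm (y - x) powr lam) \<longlongrightarrow> 0) (at x within UNIV)"
    using assms(2) by (intro tendsto_zero_powrI[OF _ tendsto_const]) auto
  then have "((\<lambda>y. L * norm (y - x) powr lam) \<longlongrightarrow> 0) (at x within UNIV)"
    by (rule tendsto_mult_right_zero)
  ultimately have "((\<lambda>y. f y - f x) \<longlongrightarrow> 0) (at x within UNIV)"
    by (rule Lim_null_comparison[OF always_eventually])
  then show "(f \<longlongrightarrow> f x) (at x within UNIV)"
    by (simp add: LIM_zero_iff)
qed

lemma holder_add_id_norm_le:
  assumes "holder L lam \<phi>" "L \<ge> 0" "lam \<ge> 0" "norm (x - y) \<le> r"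
  shows "norm ((x + \<phi> x) - (y + \<phi> y)) \<le> r + L * r powr lam"
proof -
  have "norm ((x + \<phi> x) - (y + \<phi> y)) \<le> norm (x - y) + norm (\<phi> x - \<phi> y)"
    by (metis add_diff_add norm_triangle_ineq)
  also have "norm (\<phi> x - \<phi> y) \<le> L * norm (x - y) powr lam"
    using assms(1) by (simp add: holder_def)
  also have "L * norm (x - y) powr lam \<le> L * r powr lam"
    using assms by (intro mult_left_mono powr_mono2) auto
  finally show ?thesis
    using assms(4) by linarith
qed

lemma prob_dist_pushforward:
  fixes T :: "'a::euclidean_space \<Rightarrow> 'b::euclidean_space"
  assumes "T \<in> borel_measurable borel" "prob_dist \<mu>"
  shows "prob_dist (pushforward T \<mu>)"
proof -
  have sets_\<mu>: "sets \<mu> = sets borel" and "prob_space \<mu>"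
    using assms(2) by (auto simp: prob_dist_def)
  moreover have "T \<in> borel_measurable \<mu>"
    using assms(1) by (simp add: measurable_cong_sets[OF sets_\<mu> refl])
  ultimately show ?thesis
    unfolding prob_dist_def pushforward_def by (simp add: prob_space.prob_space_distr)
qed

lemma measurable_map_prod_coupling:
  fixes T :: "'a::euclidean_space \<Rightarrow> 'b::euclidean_space"
  assumes T: "T \<in> borel_measurable borel" and \<gamma>: "\<gamma> \<in> couplings \<mu> \<mu>'"
  shows "map_prod T T \<in> measurable \<gamma> (borel \<Otimes>\<^sub>M borel)"
proof -
  have "sets \<gamma> = sets (borel \<Otimes>\<^sub>M borel)"
    using \<gamma> by (simp add: couplings_def)
  then show ?thesis
    unfolding measurable_cong_sets[OF _ refl] map_prod_def split_beta' using T by measurable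
qed

lemma distr_distr_comp_eq:
  assumes "f \<in> measurable M N" "g \<in> measurable N K" "f' \<in> measurable M N'" "g' \<in> measurable N' K"
    and "g \<circ> f = g' \<circ> f'"
  shows "distr (distr M N f) K g = distr (distr M N' f') K g'"
  using assms by (simp add: distr_distr)

lemma couplings_pushforward:
  fixes T :: "'a::euclidean_space \<Rightarrow> 'b::euclidean_space"
  assumes T: "T \<in> borel_measurable borel" and \<gamma>: "\<gamma> \<in> couplings \<mu> \<mu>'"
  shows "distr \<gamma> (borel \<Otimes>\<^sub>M borel) (map_prod T T) \<in> couplings (pushforward T \<mu>) (pushforward T \<mu>')"
proof -
  have sets_\<gamma>: "sets \<gamma> = sets (borel \<Otimes>\<^sub>M borel)" and "prob_space \<gamma>"
    and marginals: "distr \<gamma> borel fst = \<mu>" "distr \<gamma> borel snd = \<mu>'"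
    using \<gamma> by (auto simp: couplings_def)
  have F: "map_prod T T \<in> measurable \<gamma> (borel \<Otimes>\<^sub>M borel)"
    by (rule measurable_map_prod_coupling[OF T \<gamma>])
  have proj: "fst \<in> borel_measurable \<gamma>" "snd \<in> borel_measurable \<gamma>"
    unfolding measurable_cong_sets[OF sets_\<gamma> refl] by measurable
  have "distr (distr \<gamma> (borel \<Otimes>\<^sub>M borel) (map_prod T T)) borel fst = distr (distr \<gamma> borel fst) borel T"
    "distr (distr \<gamma> (borel \<Otimes>\<^sub>M borel) (map_prod T T)) borel snd = distr (distr \<gamma> borel snd) borel T"
    using distr_distr_comp_eq[OF F measurable_fst proj(1) T]
      distr_distr_comp_eq[OF F measurable_snd proj(2) T] by simp_all
  with marginals show ?thesis
    using prob_space.prob_space_distr[OF \<open>prob_space \<gamma>\<close> F]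
    by (simp add: couplings_def pushforward_def)
qed

lemma esssup_norm_coupling_pushforward_le:
  fixes T :: "'a::euclidean_space \<Rightarrow> 'b::euclidean_space"
  assumes T: "T \<in> borel_measurable borel" and \<gamma>: "\<gamma> \<in> couplings \<mu> \<mu>'"
    and bound: "\<And>x y. norm (x - y) \<le> r \<Longrightarrow> norm (T x - T y) \<le> s"
    and ess: "esssup \<gamma> (\<lambda>p. ereal (norm (fst p - snd p))) \<le> ereal r"
  shows "esssup (distr \<gamma> (borel \<Otimes>\<^sub>M borel) (map_prod T T)) (\<lambda>p. ereal (norm (fst p - snd p)))
    \<le> ereal s"
proof (rule esssup_I)
  have F: "map_prod T T \<in> measurable \<gamma> (borel \<Otimes>\<^sub>M borel)"
    by (rule measurable_map_prod_coupling[OF T \<gamma>])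
  show "(\<lambda>p. ereal (norm (fst p - snd p))) \<in> borel_measurable (distr \<gamma> (borel \<Otimes>\<^sub>M borel) (map_prod T T))"
    by measurable
  have "AE p in \<gamma>. ereal (norm (fst p - snd p)) \<le> ereal r"
    using esssup_AE[of "\<lambda>p. ereal (norm (fst p - snd p))" \<gamma>]
    by eventually_elim (rule order_trans[OF _ ess])
  then have "AE p in \<gamma>. ereal (norm (fst (map_prod T T p) - snd (map_prod T T p))) \<le> ereal s"
    by (auto simp: map_prod_def split_beta' intro: bound elim!: eventually_mono)
  then show "AE p in distr \<gamma> (borel \<Otimes>\<^sub>M borel) (map_prod T T). ereal (norm (fst p - snd p)) \<le> ereal s"
    by (subst AE_distr_iff[OF F]) auto
qed

lemma W_inf_pushforward_le:
  fixes T :: "'a::euclidean_space \<Rightarrow> 'b::euclidean_space"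
  assumes T: "T \<in> borel_measurable borel"
    and modulus: "\<And>e. e > 0 \<Longrightarrow> \<exists>r>h. \<forall>x y. norm (x - y) \<le> r \<longrightarrow> norm (T x - T y) \<le> z + e"
    and W: "W_inf \<mu> \<mu>' \<le> ereal h"
  shows "W_inf (pushforward T \<mu>) (pushforward T \<mu>') \<le> ereal z"
proof (rule ereal_le_epsilon2)
  fix e :: real
  assume "e > 0"
  then obtain r where "r > h" and bound: "\<And>x y. norm (x - y) \<le> r \<Longrightarrow> norm (T x - T y) \<le> z + e"
    using modulus by blast
  then have "W_inf \<mu> \<mu>' < ereal r"
    using W by (simp add: le_less_trans)
  then obtain \<gamma> where \<gamma>: "\<gamma> \<in> couplings \<mu> \<mu>'"
    and "esssup \<gamma> (\<lambda>p. ereal (norm (fst p - snd p))) < ereal r"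
    unfolding W_inf_def by (auto simp: INF_less_iff)
  then have "W_inf (pushforward T \<mu>) (pushforward T \<mu>') \<le> ereal (z + e)"
    unfolding W_inf_def
    by (intro INF_lower2[OF couplings_pushforward[OF T \<gamma>]]
        esssup_norm_coupling_pushforward_le[OF T \<gamma> bound]) auto
  then show "W_inf (pushforward T \<mu>) (pushforward T \<mu>') \<le> ereal z + ereal e"
    by simp
qed

lemma ennreal_powr_le_mult_powr_diff_one:
  fixes a :: ennreal and m \<alpha> :: real
  assumes "a \<noteq> \<infinity>" "0 \<le> m" "m \<le> enn2real a"
  shows "ennreal (m powr \<alpha>) \<le> a * ennreal (m powr (\<alpha> - 1))"
proof -
  have "m powr \<alpha> \<le> enn2real a * m powr (\<alpha> - 1)"
  proof (cases "m = 0")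
    case False
    then have "m powr \<alpha> = m * m powr (\<alpha> - 1)"
      using assms(2) by (simp add: powr_mult_base)
    also have "\<dots> \<le> enn2real a * m powr (\<alpha> - 1)"
      using assms(3) by (intro mult_right_mono) auto
    finally show ?thesis .
  qed simp
  then have "ennreal (m powr \<alpha>) \<le> ennreal (enn2real a) * ennreal (m powr (\<alpha> - 1))"
    by (simp add: ennreal_mult''[symmetric] ennreal_leI)
  then show ?thesis
    using assms(1) by (simp add: less_top)
qed

lemma ennreal_young_powr:
  fixes a :: ennreal and m \<alpha> :: real
  assumes "a \<noteq> \<infinity>" "0 \<le> m" "\<alpha> > 1"
  shows "a * ennreal (m powr (\<alpha> - 1))
    \<le> ennreal (1 / \<alpha>) * ennreal (enn2real a powr \<alpha>) + ennreal (1 - 1 / \<alpha>) * ennreal (m powr \<alpha>)"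
proof -
  have conj: "\<alpha> / (\<alpha> - 1) > 1" "1 / \<alpha> + 1 / (\<alpha> / (\<alpha> - 1)) = 1"
    using assms(3) by (simp_all add: field_simps)
  have "enn2real a * m powr (\<alpha> - 1)
      \<le> enn2real a powr \<alpha> / \<alpha> + (m powr (\<alpha> - 1)) powr (\<alpha> / (\<alpha> - 1)) / (\<alpha> / (\<alpha> - 1))"
    by (rule Youngs_inequality[OF _ conj]) (use assms in auto)
  also have "(m powr (\<alpha> - 1)) powr (\<alpha> / (\<alpha> - 1)) = m powr \<alpha>"
    using assms by (simp add: powr_powr)
  finally have "enn2real a * m powr (\<alpha> - 1) \<le> 1 / \<alpha> * enn2real a powr \<alpha> + (1 - 1 / \<alpha>) * m powr \<alpha>"
    using assms(3) by (simp add: field_simps)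
  then have "ennreal (enn2real a) * ennreal (m powr (\<alpha> - 1))
      \<le> ennreal (1 / \<alpha>) * ennreal (enn2real a powr \<alpha>) + ennreal (1 - 1 / \<alpha>) * ennreal (m powr \<alpha>)"
    using assms(3) by (simp add: ennreal_plus[symmetric] ennreal_mult[symmetric] ennreal_leI del: ennreal_plus)
  then show ?thesis
    using assms(1) by (simp add: less_top)
qed

lemma ennreal_le_of_le_convex_comb:
  fixes x b :: ennreal and t :: real
  assumes "x \<noteq> \<infinity>" "0 < t" "t \<le> 1" "x \<le> ennreal t * b + ennreal (1 - t) * x"
  shows "x \<le> b"
proof (cases "b = \<infinity>")
  case False
  obtain x' b' where x': "x = ennreal x'" "0 \<le> x'" and b': "b = ennreal b'" "0 \<le> b'"
    using False assms(1) by (cases x; cases b) auto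
  then have "x' \<le> t * b' + (1 - t) * x'"
    using assms(2-4) by (simp add: ennreal_plus[symmetric] ennreal_mult[symmetric] del: ennreal_plus)
  then have "t * x' \<le> t * b'"
    by (simp add: algebra_simps)
  then show ?thesis
    using assms(2) x' b' by (simp add: ennreal_leI)
qed simp

lemma nn_integral_powr_eq_SUP_min:
  fixes G :: "'a \<Rightarrow> real"
  assumes G: "G \<in> borel_measurable M" "\<And>y. 0 \<le> G y" and "\<alpha> \<ge> 0"
  shows "(\<integral>\<^sup>+ y. ennreal (G y powr \<alpha>) \<partial>M)
    = (SUP n. \<integral>\<^sup>+ y. ennreal (min (G y) (real n) powr \<alpha>) \<partial>M)"
proof -
  have "(SUP n. ennreal (min (G y) (real n) powr \<alpha>)) = ennreal (G y powr \<alpha>)" for y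
  proof (rule antisym)
    show "(SUP n. ennreal (min (G y) (real n) powr \<alpha>)) \<le> ennreal (G y powr \<alpha>)"
      using assms by (intro SUP_least ennreal_leI powr_mono2) auto
    obtain n :: nat where "G y \<le> real n"
      using real_arch_simple by blast
    then show "ennreal (G y powr \<alpha>) \<le> (SUP n. ennreal (min (G y) (real n) powr \<alpha>))"
      by (intro SUP_upper2[of n]) (auto simp: min_def)
  qed
  moreover have "(\<integral>\<^sup>+ y. (SUP n. ennreal (min (G y) (real n) powr \<alpha>)) \<partial>M)
      = (SUP n. \<integral>\<^sup>+ y. ennreal (min (G y) (real n) powr \<alpha>) \<partial>M)"
  proof (rule nn_integral_monotone_convergence_SUP)
    show "incseq (\<lambda>n y. ennreal (min (G y) (real n) powr \<alpha>))"
      using assms by (auto simp: incseq_def le_fun_def intro!: ennreal_leI powr_mono2)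
  qed (use G in measurable)
  ultimately show ?thesis
    by simp
qed

definition renyi_moment :: "real \<Rightarrow> 'a measure \<Rightarrow> 'a measure \<Rightarrow> ennreal" where
  "renyi_moment \<alpha> \<mu> \<nu> = (\<integral>\<^sup>+ x. ennreal (enn2real (RN_deriv \<nu> \<mu> x) powr \<alpha>) \<partial>\<nu>)"

lemma renyi_eq_renyi_moment:
  assumes "absolutely_continuous \<nu> \<mu>"
  shows "renyi \<alpha> \<mu> \<nu> = (if renyi_moment \<alpha> \<mu> \<nu> = \<infinity> then \<infinity>
                          else ereal (ln (enn2real (renyi_moment \<alpha> \<mu> \<nu>)) / (\<alpha> - 1)))"
  using assms by (simp add: renyi_def renyi_moment_def Let_def)

lemma absolutely_continuous_distr:
  assumes ac: "absolutely_continuous Q P" and sets: "sets P = sets Q"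
    and T: "T \<in> measurable Q N"
  shows "absolutely_continuous (distr Q N T) (distr P N T)"
  unfolding absolutely_continuous_def
proof
  fix X
  assume "X \<in> null_sets (distr Q N T)"
  then have "T -` X \<inter> space Q \<in> null_sets Q" "X \<in> sets N"
    using null_sets_distr_iff[OF T] by auto
  then have "T -` X \<inter> space P \<in> null_sets P"
    using ac sets_eq_imp_space_eq[OF sets] unfolding absolutely_continuous_def by auto
  moreover have "T \<in> measurable P N"
    using T by (simp add: measurable_cong_sets[OF sets refl])
  ultimately show "X \<in> null_sets (distr P N T)"
    using null_sets_distr_iff \<open>X \<in> sets N\<close> by auto
qed

lemma absolutely_continuous_pushforward:
  fixes T :: "'a::euclidean_space \<Rightarrow> 'b::euclidean_space"
  assumes "prob_dist P" "prob_dist Q" "absolutely_continuous Q P" "T \<in> borel_measurable borel"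
  shows "absolutely_continuous (pushforward T Q) (pushforward T P)"
proof -
  have sets: "sets P = sets borel" "sets Q = sets borel"
    using assms(1,2) by (simp_all add: prob_dist_def)
  moreover have "T \<in> borel_measurable Q"
    using assms(4) by (simp add: measurable_cong_sets[OF sets(2) refl])
  ultimately show ?thesis
    unfolding pushforward_def using assms(3) by (intro absolutely_continuous_distr) auto
qed

lemma AE_RN_deriv_finite:
  assumes "prob_dist P" "prob_dist Q" "absolutely_continuous Q P"
  shows "AE x in Q. RN_deriv Q P x \<noteq> \<infinity>"
proof -
  interpret P: prob_space P
    using assms(1) by (simp add: prob_dist_def)
  interpret Q: prob_space Q
    using assms(2) by (simp add: prob_dist_def)
  show ?thesis
    using assms by (intro Q.RN_deriv_finite P.sigma_finite_measure_axioms) (simp_all add: prob_dist_def)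
qed

lemma renyi_moment_nonzero:
  assumes P: "prob_dist P" and Q: "prob_dist Q" and ac: "absolutely_continuous Q P"
  shows "renyi_moment \<alpha> P Q \<noteq> 0"
proof
  interpret P: prob_space P
    using P by (simp add: prob_dist_def)
  interpret Q: prob_space Q
    using Q by (simp add: prob_dist_def)
  have sets: "sets P = sets Q"
    using P Q by (simp add: prob_dist_def)
  assume "renyi_moment \<alpha> P Q = 0"
  then have "AE x in Q. ennreal (enn2real (RN_deriv Q P x) powr \<alpha>) = 0"
    unfolding renyi_moment_def by (subst (asm) nn_integral_0_iff_AE) auto
  with AE_RN_deriv_finite[OF P Q ac] have "AE x in Q. RN_deriv Q P x * 1 = 0"
    by eventually_elim (auto simp: ennreal_eq_0_iff enn2real_eq_0_iff)
  then have "(\<integral>\<^sup>+ x. RN_deriv Q P x * 1 \<partial>Q) = 0"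
    by (subst nn_integral_0_iff_AE) auto
  moreover have "(\<integral>\<^sup>+ x. 1 \<partial>P) = (\<integral>\<^sup>+ x. RN_deriv Q P x * 1 \<partial>Q)"
    by (rule Q.RN_deriv_nn_integral[OF ac sets]) simp
  ultimately have "(\<integral>\<^sup>+ x. 1 \<partial>P) = 0"
    by simp
  then show False
    using P.emeasure_space_1 by simp
qed

lemma nn_integral_RN_deriv_pushforward:
  fixes T :: "'a::euclidean_space \<Rightarrow> 'b::euclidean_space"
  assumes P: "prob_dist P" and Q: "prob_dist Q" and ac: "absolutely_continuous Q P"
    and T: "T \<in> borel_measurable borel" and k: "k \<in> borel_measurable borel"
  shows "(\<integral>\<^sup>+ y. RN_deriv (pushforward T Q) (pushforward T P) y * k y \<partial>pushforward T Q)
    = (\<integral>\<^sup>+ x. RN_deriv Q P x * k (T x) \<partial>Q)"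
proof -
  have sets_P: "sets P = sets borel" and sets_Q: "sets Q = sets borel"
    using P Q by (simp_all add: prob_dist_def)
  interpret Q: prob_space Q
    using Q by (simp add: prob_dist_def)
  interpret Q': prob_space "pushforward T Q"
    using prob_dist_pushforward[OF T Q] by (simp add: prob_dist_def)
  have TP: "T \<in> borel_measurable P" and TQ: "T \<in> borel_measurable Q"
    using T by (simp_all add: measurable_cong_sets[OF sets_P refl] measurable_cong_sets[OF sets_Q refl])
  have ac': "absolutely_continuous (pushforward T Q) (pushforward T P)"
    by (rule absolutely_continuous_pushforward[OF P Q ac T])
  have "(\<integral>\<^sup>+ y. RN_deriv (pushforward T Q) (pushforward T P) y * k y \<partial>pushforward T Q)
      = (\<integral>\<^sup>+ y. k y \<partial>pushforward T P)"
    using ac' k by (intro Q'.RN_deriv_nn_integral[symmetric]) (auto simp: pushforward_def)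
  also have "\<dots> = (\<integral>\<^sup>+ x. k (T x) \<partial>P)"
    unfolding pushforward_def using TP k by (intro nn_integral_distr) auto
  also have "\<dots> = (\<integral>\<^sup>+ x. RN_deriv Q P x * k (T x) \<partial>Q)"
    using ac sets_P sets_Q TQ k by (intro Q.RN_deriv_nn_integral) auto
  finally show ?thesis .
qed

lemma nn_integral_powr_pushforward_young:
  fixes T :: "'a::euclidean_space \<Rightarrow> 'b::euclidean_space"
  assumes P: "prob_dist P" and Q: "prob_dist Q" and ac: "absolutely_continuous Q P"
    and T: "T \<in> borel_measurable borel" and "\<alpha> > 1"
    and m: "m \<in> borel_measurable borel" "\<And>y. 0 \<le> m y"
      "\<And>y. m y \<le> enn2real (RN_deriv (pushforward T Q) (pushforward T P) y)"
  shows "(\<integral>\<^sup>+ y. ennreal (m y powr \<alpha>) \<partial>pushforward T Q)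
    \<le> ennreal (1 / \<alpha>) * renyi_moment \<alpha> P Q
      + ennreal (1 - 1 / \<alpha>) * (\<integral>\<^sup>+ y. ennreal (m y powr \<alpha>) \<partial>pushforward T Q)"
proof -
  let ?P' = "pushforward T P" and ?Q' = "pushforward T Q"
  let ?g = "RN_deriv ?Q' ?P'" and ?f = "RN_deriv Q P"
  have sets_Q: "sets Q = sets borel"
    using Q by (simp add: prob_dist_def)
  have TQ: "T \<in> borel_measurable Q"
    using T by (simp add: measurable_cong_sets[OF sets_Q refl])
  have meas [measurable]: "m \<in> borel_measurable borel" "(\<lambda>x. ennreal (enn2real (?f x) powr \<alpha>)) \<in> borel_measurable Q"
    "(\<lambda>x. ennreal (m (T x) powr \<alpha>)) \<in> borel_measurable Q"
    using m(1) TQ by measurable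
  have "AE y in ?Q'. ennreal (m y powr \<alpha>) \<le> ?g y * ennreal (m y powr (\<alpha> - 1))"
    using AE_RN_deriv_finite[OF prob_dist_pushforward[OF T P] prob_dist_pushforward[OF T Q]
        absolutely_continuous_pushforward[OF P Q ac T]]
    by eventually_elim (rule ennreal_powr_le_mult_powr_diff_one[OF _ m(2,3)])
  then have "(\<integral>\<^sup>+ y. ennreal (m y powr \<alpha>) \<partial>?Q') \<le> (\<integral>\<^sup>+ y. ?g y * ennreal (m y powr (\<alpha> - 1)) \<partial>?Q')"
    by (rule nn_integral_mono_AE)
  also have "\<dots> = (\<integral>\<^sup>+ x. ?f x * ennreal (m (T x) powr (\<alpha> - 1)) \<partial>Q)"
    by (rule nn_integral_RN_deriv_pushforward[OF P Q ac T]) measurable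
  also have "\<dots> \<le> (\<integral>\<^sup>+ x. ennreal (1 / \<alpha>) * ennreal (enn2real (?f x) powr \<alpha>)
                        + ennreal (1 - 1 / \<alpha>) * ennreal (m (T x) powr \<alpha>) \<partial>Q)"
  proof (rule nn_integral_mono_AE)
    show "AE x in Q. ?f x * ennreal (m (T x) powr (\<alpha> - 1))
        \<le> ennreal (1 / \<alpha>) * ennreal (enn2real (?f x) powr \<alpha>) + ennreal (1 - 1 / \<alpha>) * ennreal (m (T x) powr \<alpha>)"
      using AE_RN_deriv_finite[OF P Q ac]
      by eventually_elim (rule ennreal_young_powr[OF _ m(2) \<open>\<alpha> > 1\<close>])
  qed
  also have "\<dots> = (\<integral>\<^sup>+ x. ennreal (1 / \<alpha>) * ennreal (enn2real (?f x) powr \<alpha>) \<partial>Q)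
                  + (\<integral>\<^sup>+ x. ennreal (1 - 1 / \<alpha>) * ennreal (m (T x) powr \<alpha>) \<partial>Q)"
    by (rule nn_integral_add) measurable
  also have "\<dots> = ennreal (1 / \<alpha>) * renyi_moment \<alpha> P Q
                  + ennreal (1 - 1 / \<alpha>) * (\<integral>\<^sup>+ x. ennreal (m (T x) powr \<alpha>) \<partial>Q)"
    unfolding renyi_moment_def using meas by (simp only: nn_integral_cmult)
  also have "(\<integral>\<^sup>+ x. ennreal (m (T x) powr \<alpha>) \<partial>Q) = (\<integral>\<^sup>+ y. ennreal (m y powr \<alpha>) \<partial>?Q')"
    unfolding pushforward_def by (rule nn_integral_distr[symmetric, OF TQ]) measurable
  finally show ?thesis .
qed

lemma truncated_renyi_moment_pushforward_le:
  fixes T :: "'a::euclidean_space \<Rightarrow> 'b::euclidean_space" and n :: nat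
  assumes P: "prob_dist P" and Q: "prob_dist Q" and ac: "absolutely_continuous Q P"
    and T: "T \<in> borel_measurable borel" and "\<alpha> > 1"
  defines "m \<equiv> \<lambda>y. min (enn2real (RN_deriv (pushforward T Q) (pushforward T P) y)) (real n)"
  shows "(\<integral>\<^sup>+ y. ennreal (m y powr \<alpha>) \<partial>pushforward T Q) \<le> renyi_moment \<alpha> P Q"
proof -
  interpret Q': prob_space "pushforward T Q"
    using prob_dist_pushforward[OF T Q] by (simp add: prob_dist_def)
  have "RN_deriv (pushforward T Q) (pushforward T P) \<in> borel_measurable borel"
    using borel_measurable_RN_deriv[of "pushforward T Q" "pushforward T P"] by (simp add: pushforward_def)
  then have "m \<in> borel_measurable borel"
    unfolding m_def by measurable
  then have young: "(\<integral>\<^sup>+ y. ennreal (m y powr \<alpha>) \<partial>pushforward T Q)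
    \<le> ennreal (1 / \<alpha>) * renyi_moment \<alpha> P Q
      + ennreal (1 - 1 / \<alpha>) * (\<integral>\<^sup>+ y. ennreal (m y powr \<alpha>) \<partial>pushforward T Q)"
    by (rule nn_integral_powr_pushforward_young[OF P Q ac T \<open>\<alpha> > 1\<close>]) (auto simp: m_def)
  have "(\<integral>\<^sup>+ y. ennreal (m y powr \<alpha>) \<partial>pushforward T Q)
      \<le> (\<integral>\<^sup>+ y. ennreal (real n powr \<alpha>) \<partial>pushforward T Q)"
    using \<open>\<alpha> > 1\<close> by (intro nn_integral_mono ennreal_leI powr_mono2) (auto simp: m_def)
  then have "(\<integral>\<^sup>+ y. ennreal (m y powr \<alpha>) \<partial>pushforward T Q) \<noteq> \<infinity>"
    by (auto simp: Q'.emeasure_space_1 top_unique)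
  moreover have "0 < 1 / \<alpha>" "1 / \<alpha> \<le> 1"
    using \<open>\<alpha> > 1\<close> by simp_all
  ultimately show ?thesis
    by (rule ennreal_le_of_le_convex_comb[OF _ _ _ young])
qed

lemma renyi_moment_pushforward_le:
  fixes T :: "'a::euclidean_space \<Rightarrow> 'b::euclidean_space"
  assumes P: "prob_dist P" and Q: "prob_dist Q" and ac: "absolutely_continuous Q P"
    and T: "T \<in> borel_measurable borel" and "\<alpha> > 1"
  shows "renyi_moment \<alpha> (pushforward T P) (pushforward T Q) \<le> renyi_moment \<alpha> P Q"
proof -
  let ?G = "\<lambda>y. enn2real (RN_deriv (pushforward T Q) (pushforward T P) y)"
  have "renyi_moment \<alpha> (pushforward T P) (pushforward T Q)
      = (SUP n. \<integral>\<^sup>+ y. ennreal (min (?G y) (real n) powr \<alpha>) \<partial>pushforward T Q)"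
    unfolding renyi_moment_def using \<open>\<alpha> > 1\<close> by (intro nn_integral_powr_eq_SUP_min) auto
  also have "\<dots> \<le> renyi_moment \<alpha> P Q"
    using truncated_renyi_moment_pushforward_le[OF P Q ac T \<open>\<alpha> > 1\<close>] by (rule SUP_least)
  finally show ?thesis .
qed

theorem renyi_pushforward_le:
  fixes T :: "'a::euclidean_space \<Rightarrow> 'b::euclidean_space"
  assumes P: "prob_dist P" and Q: "prob_dist Q" and T: "T \<in> borel_measurable borel" and "\<alpha> > 1"
  shows "renyi \<alpha> (pushforward T P) (pushforward T Q) \<le> renyi \<alpha> P Q"
proof (cases "absolutely_continuous Q P \<and> renyi_moment \<alpha> P Q \<noteq> \<infinity>")
  case False
  then show ?thesis
    by (auto simp: renyi_def renyi_moment_def Let_def)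
next
  case True
  let ?M = "renyi_moment \<alpha> P Q" and ?M' = "renyi_moment \<alpha> (pushforward T P) (pushforward T Q)"
  have ac': "absolutely_continuous (pushforward T Q) (pushforward T P)"
    using absolutely_continuous_pushforward[OF P Q _ T] True by blast
  have "?M' \<le> ?M"
    using renyi_moment_pushforward_le[OF P Q _ T \<open>\<alpha> > 1\<close>] True by blast
  moreover have "?M' \<noteq> 0"
    by (rule renyi_moment_nonzero[OF prob_dist_pushforward[OF T P] prob_dist_pushforward[OF T Q] ac'])
  ultimately have "0 < enn2real ?M'" "enn2real ?M' \<le> enn2real ?M"
    using True by (auto simp: enn2real_positive_iff enn2real_mono less_top top_unique zero_less_iff_neq_zero)
  then have "ln (enn2real ?M') / (\<alpha> - 1) \<le> ln (enn2real ?M) / (\<alpha> - 1)"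
    using \<open>\<alpha> > 1\<close> by (intro divide_right_mono) auto
  with True ac' \<open>?M' \<le> ?M\<close> show ?thesis
    by (auto simp: renyi_eq_renyi_moment top_unique)
qed

lemma shifted_renyi_pushforward_le:
  fixes T :: "'a::euclidean_space \<Rightarrow> 'b::euclidean_space"
  assumes T: "T \<in> borel_measurable borel"
    and modulus: "\<And>e. e > 0 \<Longrightarrow> \<exists>r>h. \<forall>x y. norm (x - y) \<le> r \<longrightarrow> norm (T x - T y) \<le> z + e"
    and \<nu>: "prob_dist \<nu>" and "\<alpha> > 1"
  shows "shifted_renyi \<alpha> z (pushforward T \<mu>) (pushforward T \<nu>) \<le> shifted_renyi \<alpha> h \<mu> \<nu>"
  unfolding shifted_renyi_def[of _ h]
proof (rule INF_greatest, clarify)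
  fix \<mu>'
  assume \<mu>': "prob_dist \<mu>'" and "W_inf \<mu> \<mu>' \<le> ereal h"
  then have "W_inf (pushforward T \<mu>) (pushforward T \<mu>') \<le> ereal z"
    by (intro W_inf_pushforward_le[OF T modulus])
  then have "shifted_renyi \<alpha> z (pushforward T \<mu>) (pushforward T \<nu>)
      \<le> renyi \<alpha> (pushforward T \<mu>') (pushforward T \<nu>)"
    unfolding shifted_renyi_def using prob_dist_pushforward[OF T \<mu>'] by (intro INF_lower) simp
  also have "\<dots> \<le> renyi \<alpha> \<mu>' \<nu>"
    by (rule renyi_pushforward_le[OF \<mu>' \<nu> T \<open>\<alpha> > 1\<close>])
  finally show "shifted_renyi \<alpha> z (pushforward T \<mu>) (pushforward T \<nu>) \<le> renyi \<alpha> \<mu>' \<nu>" .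
qed

theorem mainTheorem8:
  fixes \<phi> :: "'a::euclidean_space \<Rightarrow> 'a"
    and L lam \<alpha> z :: real
    and \<mu> \<nu> :: "'a measure"
  assumes "L \<ge> 0" and "0 < lam" and "lam \<le> 1"
    and "holder L lam \<phi>"
    and "prob_dist \<mu>" and "prob_dist \<nu>"
    and "\<alpha> > 1" and "z \<ge> 0"
  shows "shifted_renyi \<alpha> z (pushforward (\<lambda>x. x + \<phi> x) \<mu>) (pushforward (\<lambda>x. x + \<phi> x) \<nu>)
         \<le> shifted_renyi \<alpha> (THE x. x \<ge> 0 \<and> x + L * x powr lam = z) \<mu> \<nu>"
proof -
  define h where "h = (THE x. x \<ge> 0 \<and> x + L * x powr lam = z)"
  have h: "h \<ge> 0" "h + L * h powr lam = z"
    using add_powr_eq_The[OF assms(1,2,8)] unfolding h_def by auto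
  have T: "(\<lambda>x. x + \<phi> x) \<in> borel_measurable borel"
    using holder_continuous_on[OF assms(4,2)]
    by (intro borel_measurable_continuous_onI continuous_intros)
  have modulus: "\<exists>r>h. \<forall>x y. norm (x - y) \<le> r \<longrightarrow> norm ((x + \<phi> x) - (y + \<phi> y)) \<le> z + e"
    if e: "e > 0" for e
  proof -
    obtain e' where "e' > 0" and e': "(h + e') + L * (h + e') powr lam \<le> z + e"
      using add_powr_right_continuous[OF assms(1,2) h(1) e] h(2) by auto
    have "norm ((x + \<phi> x) - (y + \<phi> y)) \<le> z + e" if "norm (x - y) \<le> h + e'" for x y
      using holder_add_id_norm_le[OF assms(4,1) _ that] assms(2) e' by linarith
    with \<open>e' > 0\<close> show ?thesis
      by (intro exI[of _ "h + e'"]) auto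
  qed
  show ?thesis
    unfolding h_def[symmetric] using T modulus assms(6,7) by (rule shifted_renyi_pushforward_le)
qed

end
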